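(* Let $(X,d_X,\mu,T)$ and $(Y,d_Y,\nu,S)$ be compact metric measure-preserving systems with anchor sequences $(a_r)$ dense in $\operatorname{supp}\mu$ and $(b_r)$ dense in $\operatorname{supp}\nu$, and fix $p\ge1$. Then $\widetilde{\mathrm{Dep}}_{n,m,R,p}(X,Y)=0$ for all $n,m,R\ge1$ if and only if the systems are disjoint, i.e. $\mathcal J(T,S)=\{\mu\otimes\nu\}$.
   Context: A compact metric measure-preserving system $(X,d_X,\mu,T)$: $(X,d_X)$ compact metric, $\mu$ Borel probability, $T$ Borel with $T_\#\mu=\mu$. $\mathcal J(T,S)$: Borel probability measures on $X\times Y$ with marginals $\mu,\nu$ invariant under $T\times S$. For $z_i=(x_i,y_i)$, $\mathcal D^X_{n,m}=(d_X(T^ax_i,T^bx_j))_{1\le i,j\le n,0\le a,b<m}$, $\widetilde{\mathcal D}^X_{n,m,R}=(\mathcal D^X_{n,m},(d_X(T^ax_i,a_r))_{1\le i\le n,0\le a<m,1\le r\le R})$, and $\widetilde{\mathcal D}^Y_{n,m,R}$ analogously with $d_Y,S,b_r$; $\widetilde\Phi_{n,m,R}(\lambda)=\mathrm{Law}_{\lambda^{\otimes n}}(\widetilde{\mathcal D}^X_{n,m,R},\widetilde{\mathcal D}^Y_{n,m,R})$. $W_p$ is the $p$-Wasserstein distance on probability measures on the finite array cube with a fixed product Euclidean metric, and $\widetilde{\mathrm{Dep}}_{n,m,R,p}(X,Y)=\sup_{\lambda\in\mathcal J(T,S)}W_p(\widetilde\Phi_{n,m,R}(\lambda),\widetilde\Phi_{n,m,R}(\mu\otimes\nu))$.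 *)

theory Defs
  imports "HOL-Probability.Probability"
begin

definition cmmps :: "'a::metric_space measure \<Rightarrow> ('a \<Rightarrow> 'a) \<Rightarrow> bool" where
  "cmmps M T \<longleftrightarrow> compact (UNIV :: 'a set) \<and> prob_space M \<and> sets M = sets borel
     \<and> T \<in> borel_measurable borel \<and> distr M borel T = M"

definition supp :: "'a::topological_space measure \<Rightarrow> 'a set" where
  "supp M = {x. \<forall>U. open U \<and> x \<in> U \<longrightarrow> emeasure M U > 0}"

definition joinings :: "'a::metric_space measure \<Rightarrow> 'b::metric_space measure
    \<Rightarrow> ('a \<Rightarrow> 'a) \<Rightarrow> ('b \<Rightarrow> 'b) \<Rightarrow> ('a \<times> 'b) measure set" where
  "joinings M N T S = {L. prob_space L \<and> sets L = sets (borel \<Otimes>\<^sub>M borel)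
     \<and> distr L borel fst = M \<and> distr L borel snd = N
     \<and> distr L L (map_prod T S) = L}"

datatype aidx = DX nat nat nat nat | AX nat nat nat | DY nat nat nat nat | AY nat nat nat

definition aidx_set :: "nat \<Rightarrow> nat \<Rightarrow> nat \<Rightarrow> aidx set" where
  "aidx_set n m R =
     {DX i j a b | i j a b. i \<in> {1..n} \<and> j \<in> {1..n} \<and> a < m \<and> b < m}
   \<union> {AX i a r | i a r. i \<in> {1..n} \<and> a < m \<and> r \<in> {1..R}}
   \<union> {DY i j a b | i j a b. i \<in> {1..n} \<and> j \<in> {1..n} \<and> a < m \<and> b < m}
   \<union> {AY i a r | i a r. i \<in> {1..n} \<and> a < m \<and> r \<in> {1..R}}"

definition dep_array :: "nat \<Rightarrow> nat \<Rightarrow> nat \<Rightarrow> ('a::metric_space \<Rightarrow> 'a) \<Rightarrow> ('b::metric_space \<Rightarrow> 'b)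
    \<Rightarrow> (nat \<Rightarrow> 'a) \<Rightarrow> (nat \<Rightarrow> 'b) \<Rightarrow> (nat \<Rightarrow> 'a \<times> 'b) \<Rightarrow> aidx \<Rightarrow> real" where
  "dep_array n m R T S as bs z = restrict (\<lambda>k. case k of
       DX i j a b \<Rightarrow> dist ((T ^^ a) (fst (z i))) ((T ^^ b) (fst (z j)))
     | AX i a r \<Rightarrow> dist ((T ^^ a) (fst (z i))) (as r)
     | DY i j a b \<Rightarrow> dist ((S ^^ a) (snd (z i))) ((S ^^ b) (snd (z j)))
     | AY i a r \<Rightarrow> dist ((S ^^ a) (snd (z i))) (bs r)) (aidx_set n m R)"

definition array_law :: "nat \<Rightarrow> nat \<Rightarrow> nat \<Rightarrow> ('a::metric_space \<Rightarrow> 'a) \<Rightarrow> ('b::metric_space \<Rightarrow> 'b)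
    \<Rightarrow> (nat \<Rightarrow> 'a) \<Rightarrow> (nat \<Rightarrow> 'b) \<Rightarrow> ('a \<times> 'b) measure \<Rightarrow> (aidx \<Rightarrow> real) measure" where
  "array_law n m R T S as bs L =
     distr (PiM {1..n} (\<lambda>_. L)) (PiM (aidx_set n m R) (\<lambda>_. borel)) (dep_array n m R T S as bs)"

definition eucl_dist :: "'i set \<Rightarrow> ('i \<Rightarrow> real) \<Rightarrow> ('i \<Rightarrow> real) \<Rightarrow> real" where
  "eucl_dist I u v = sqrt (\<Sum>k\<in>I. (u k - v k)^2)"

definition couplings :: "'i set \<Rightarrow> ('i \<Rightarrow> real) measure \<Rightarrow> ('i \<Rightarrow> real) measure
    \<Rightarrow> (('i \<Rightarrow> real) \<times> ('i \<Rightarrow> real)) measure set" where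
  "couplings I P Q = {C. prob_space C
     \<and> sets C = sets (PiM I (\<lambda>_. borel) \<Otimes>\<^sub>M PiM I (\<lambda>_. borel))
     \<and> distr C (PiM I (\<lambda>_. borel)) fst = P \<and> distr C (PiM I (\<lambda>_. borel)) snd = Q}"

definition wasserstein :: "real \<Rightarrow> 'i set \<Rightarrow> ('i \<Rightarrow> real) measure \<Rightarrow> ('i \<Rightarrow> real) measure \<Rightarrow> real" where
  "wasserstein p I P Q =
     (enn2real (INF C \<in> couplings I P Q.
        \<integral>\<^sup>+ w. ennreal (eucl_dist I (fst w) (snd w) powr p) \<partial>C)) powr (1 / p)"

definition Dep :: "nat \<Rightarrow> nat \<Rightarrow> nat \<Rightarrow> real \<Rightarrow> 'a::metric_space measure \<Rightarrow> 'b::metric_space measure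
    \<Rightarrow> ('a \<Rightarrow> 'a) \<Rightarrow> ('b \<Rightarrow> 'b) \<Rightarrow> (nat \<Rightarrow> 'a) \<Rightarrow> (nat \<Rightarrow> 'b) \<Rightarrow> real" where
  "Dep n m R p M N T S as bs =
     (SUP L \<in> joinings M N T S. wasserstein p (aidx_set n m R)
        (array_law n m R T S as bs L) (array_law n m R T S as bs (M \<Otimes>\<^sub>M N)))"

end

(*
  If the systems are disjoint, the only joining is the product measure, which is at Wasserstein
  distance 0 from itself.  Conversely, let all Dep vanish and let L be a joining.  Already for one
  point and no time shift (n = m = 1) the array law of L is at Wasserstein distance 0 from that of
  the product measure.  The anchor entries of the array are the distances of x and y to the anchors,
  so by Markov's inequality couplings of small transport cost show that L gives at most as much mass
  as the product to every product of finite intersections of anchor balls with radii shrunk by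
  delta; letting delta tend to 0 and using symmetry, the two measures agree on these rectangles.
  They form an intersection-stable family, and since the anchors are dense in the supports, the
  sigma-algebra they generate contains every Borel rectangle up to sets that are null for the
  marginals, hence for every joining.  So L is the product measure.
*)
theory Submission
  imports Defs
begin

lemma distr_pair_measure_marginals:
  assumes "prob_space M" "prob_space N" "sets M' = sets M" "sets N' = sets N"
  shows "distr (M \<Otimes>\<^sub>M N) M' fst = M" "distr (M \<Otimes>\<^sub>M N) N' snd = N"
proof -
  interpret M: prob_space M by fact
  interpret N: prob_space N by fact
  have "distr (M \<Otimes>\<^sub>M N) M' fst = distr (M \<Otimes>\<^sub>M N) M fst"
    using assms by (intro distr_cong) auto
  then show "distr (M \<Otimes>\<^sub>M N) M' fst = M"
    using N.distr_pair_fst by simp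
  show "distr (M \<Otimes>\<^sub>M N) N' snd = N"
  proof (rule measure_eqI)
    fix A assume "A \<in> sets (distr (M \<Otimes>\<^sub>M N) N' snd)"
    then have A: "A \<in> sets N"
      using assms by simp
    then have "emeasure (distr (M \<Otimes>\<^sub>M N) N' snd) A = emeasure (M \<Otimes>\<^sub>M N) (space M \<times> A)"
      using assms by (auto simp: emeasure_distr space_pair_measure dest: sets.sets_into_space
          intro!: arg_cong2[where f=emeasure])
    with A show "emeasure (distr (M \<Otimes>\<^sub>M N) N' snd) A = emeasure N A"
      by (simp add: N.emeasure_pair_measure_Times M.emeasure_space_1)
  qed (use assms in simp)
qed

lemma prob_space_emeasure_eq_on_sigma_sets:
  assumes K1: "prob_space K1" "space K1 = \<Omega>" "E \<subseteq> sets K1"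
    and K2: "prob_space K2" "space K2 = \<Omega>" "E \<subseteq> sets K2"
    and E: "Int_stable E" "\<And>X. X \<in> E \<Longrightarrow> emeasure K1 X = emeasure K2 X"
    and X: "X \<in> sigma_sets \<Omega> E"
  shows "emeasure K1 X = emeasure K2 X"
proof -
  interpret K1: prob_space K1 by (rule K1(1))
  interpret K2: prob_space K2 by (rule K2(1))
  have sigma: "sigma_sets \<Omega> E \<subseteq> sets K1" "sigma_sets \<Omega> E \<subseteq> sets K2"
    using sets.sigma_sets_subset[of E K1] sets.sigma_sets_subset[of E K2] K1 K2
    by auto
  have "E \<subseteq> Pow \<Omega>" using K1(2,3) sets.sets_into_space by blast
  from E(1) this X show ?thesis
  proof (induction rule: sigma_sets_induct_disjoint)
    case (basic A)
    then show ?case by (rule E(2))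
  next
    case (compl A)
    have A: "A \<in> sets K1" "A \<in> sets K2"
      using compl(1) sigma by blast+
    have "emeasure K1 (\<Omega> - A) = 1 - emeasure K1 A"
      unfolding K1(2)[symmetric] using A(1) by (simp add: emeasure_compl K1.emeasure_space_1)
    also have "\<dots> = 1 - emeasure K2 A"
      using compl(2) by simp
    also have "\<dots> = emeasure K2 (\<Omega> - A)"
      unfolding K2(2)[symmetric] using A(2) by (simp add: emeasure_compl K2.emeasure_space_1)
    finally show ?case .
  next
    case (union A)
    have A: "range A \<subseteq> sets K1" "range A \<subseteq> sets K2"
      using union(2) sigma by blast+
    have "emeasure K1 (\<Union>i. A i) = (\<Sum>i. emeasure K1 (A i))"
      by (rule suminf_emeasure[symmetric, OF A(1) union(1)])
    also have "\<dots> = (\<Sum>i. emeasure K2 (A i))"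
      using union(3) by simp
    also have "\<dots> = emeasure K2 (\<Union>i. A i)"
      by (rule suminf_emeasure[OF A(2) union(1)])
    finally show ?case .
  qed simp
qed

subsection \<open>Couplings and the Wasserstein distance\<close>

definition transport_cost :: "real \<Rightarrow> 'i set \<Rightarrow> (('i \<Rightarrow> real) \<times> ('i \<Rightarrow> real)) measure \<Rightarrow> ennreal"
  where "transport_cost p I C = (\<integral>\<^sup>+ w. ennreal (eucl_dist I (fst w) (snd w) powr p) \<partial>C)"

lemma wasserstein_transport_cost:
  "wasserstein p I P Q = enn2real (INF C \<in> couplings I P Q. transport_cost p I C) powr (1 / p)"
  unfolding wasserstein_def transport_cost_def ..

lemma wasserstein_nonneg: "0 \<le> wasserstein p I P Q"
  by (simp add: wasserstein_def)

lemma eucl_dist_nonneg: "0 \<le> eucl_dist I u v"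
  by (simp add: eucl_dist_def sum_nonneg)

lemma eucl_dist_commute: "eucl_dist I u v = eucl_dist I v u"
  unfolding eucl_dist_def by (simp add: power2_commute)

lemma abs_le_eucl_dist:
  assumes "finite I" "k \<in> I"
  shows "\<bar>u k - v k\<bar> \<le> eucl_dist I u v"
proof -
  have "(u k - v k)\<^sup>2 \<le> (\<Sum>j\<in>I. (u j - v j)\<^sup>2)"
    using assms by (intro member_le_sum) auto
  then have "sqrt ((u k - v k)\<^sup>2) \<le> sqrt (\<Sum>j\<in>I. (u j - v j)\<^sup>2)"
    by (rule real_sqrt_le_mono)
  then show ?thesis
    unfolding eucl_dist_def by simp
qed

lemma eucl_dist_le_sqrt_card:
  assumes "finite I" "0 \<le> B" "\<And>k. k \<in> I \<Longrightarrow> \<bar>u k - v k\<bar> \<le> B"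
  shows "eucl_dist I u v \<le> sqrt (card I) * B"
proof -
  have "(\<Sum>k\<in>I. (u k - v k)\<^sup>2) \<le> (\<Sum>k\<in>I. B\<^sup>2)"
    using assms by (intro sum_mono) (simp flip: abs_le_square_iff)
  then have "eucl_dist I u v \<le> sqrt (card I * B\<^sup>2)"
    unfolding eucl_dist_def by simp
  also have "\<dots> = sqrt (card I) * B"
    using assms(2) by (simp add: real_sqrt_mult)
  finally show ?thesis .
qed

lemma borel_measurable_eucl_dist [measurable]:
  "(\<lambda>w. eucl_dist I (fst w) (snd w)) \<in> borel_measurable (PiM I (\<lambda>_. borel) \<Otimes>\<^sub>M PiM I (\<lambda>_. borel))"
  unfolding eucl_dist_def by measurable

lemma couplingsD:
  assumes "C \<in> couplings I P Q"
  shows "prob_space C" "sets C = sets (PiM I (\<lambda>_. borel) \<Otimes>\<^sub>M PiM I (\<lambda>_. borel))"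
    "distr C (PiM I (\<lambda>_. borel)) fst = P" "distr C (PiM I (\<lambda>_. borel)) snd = Q"
  using assms unfolding couplings_def by auto

lemma couplings_pair_measure:
  assumes "prob_space P" "sets P = sets (PiM I (\<lambda>_. borel))"
    and "prob_space Q" "sets Q = sets (PiM I (\<lambda>_. borel))"
  shows "P \<Otimes>\<^sub>M Q \<in> couplings I P Q"
proof -
  have "distr (P \<Otimes>\<^sub>M Q) (PiM I (\<lambda>_. borel)) fst = P" "distr (P \<Otimes>\<^sub>M Q) (PiM I (\<lambda>_. borel)) snd = Q"
    using assms by (simp_all add: distr_pair_measure_marginals)
  moreover have "sets (P \<Otimes>\<^sub>M Q) = sets (PiM I (\<lambda>_. borel) \<Otimes>\<^sub>M PiM I (\<lambda>_. borel))"
    using assms by (intro sets_pair_measure_cong)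
  ultimately show ?thesis
    using prob_space_pair[OF assms(1,3)] unfolding couplings_def by blast
qed

lemma wasserstein_self:
  fixes I :: "'i set"
  shows "wasserstein p I P P = 0"
proof (cases "couplings I P P = {}")
  case False
  then obtain C where "C \<in> couplings I P P" by blast
  note C = couplingsD[OF this]
  let ?B = "PiM I (\<lambda>_. borel) :: ('i \<Rightarrow> real) measure"
  have fst_meas: "fst \<in> measurable C ?B"
    by (simp add: measurable_cong_sets[OF C(2) refl])
  have P: "prob_space P" "sets P = sets ?B"
    using prob_space.prob_space_distr[OF C(1) fst_meas] sets_distr[of C ?B fst] unfolding C(3) by simp_all
  have diag: "(\<lambda>x. (x, x)) \<in> measurable P (?B \<Otimes>\<^sub>M ?B)"
    unfolding measurable_cong_sets[OF P(2) refl] by measurable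
  let ?D = "distr P (?B \<Otimes>\<^sub>M ?B) (\<lambda>x. (x, x))"
  have "distr ?D ?B f = P" if "f = fst \<or> f = snd" for f
  proof -
    have "distr ?D ?B f = distr P ?B (f \<circ> (\<lambda>x. (x, x)))"
      using that diag by (intro distr_distr) auto
    also have "f \<circ> (\<lambda>x. (x, x)) = (\<lambda>x. x)"
      using that by auto
    finally show ?thesis
      using distr_id2[OF P(2)[symmetric]] by simp
  qed
  with prob_space.prob_space_distr[OF P(1) diag] have "?D \<in> couplings I P P"
    unfolding couplings_def by simp
  moreover have "transport_cost p I ?D = 0"
    unfolding transport_cost_def by (subst nn_integral_distr[OF diag]) (simp_all add: eucl_dist_def)
  ultimately have "(INF C \<in> couplings I P P. transport_cost p I C) = 0"
    using INF_lower[of ?D "couplings I P P" "transport_cost p I"] by simp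
  then show ?thesis
    by (simp add: wasserstein_transport_cost)
qed (simp add: wasserstein_def)

lemma coupling_swap:
  assumes "C \<in> couplings I P Q"
  defines "C' \<equiv> distr C (PiM I (\<lambda>_. borel) \<Otimes>\<^sub>M PiM I (\<lambda>_. borel)) (\<lambda>w. (snd w, fst w))"
  shows "C' \<in> couplings I Q P" and "transport_cost p I C' = transport_cost p I C"
proof -
  note C = couplingsD[OF assms(1)]
  let ?B = "PiM I (\<lambda>_. borel)"
  have swap: "(\<lambda>w. (snd w, fst w)) \<in> measurable C (?B \<Otimes>\<^sub>M ?B)"
    unfolding measurable_cong_sets[OF C(2) refl] by measurable
  have "distr C' ?B fst = distr C ?B (fst \<circ> (\<lambda>w. (snd w, fst w)))"
    "distr C' ?B snd = distr C ?B (snd \<circ> (\<lambda>w. (snd w, fst w)))"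
    unfolding C'_def using swap by (auto intro!: distr_distr)
  then have "distr C' ?B fst = Q" "distr C' ?B snd = P"
    using C(3,4) by (simp_all add: comp_def)
  with prob_space.prob_space_distr[OF C(1) swap] show "C' \<in> couplings I Q P"
    unfolding couplings_def C'_def by simp
  show "transport_cost p I C' = transport_cost p I C"
    unfolding transport_cost_def C'_def
    by (subst nn_integral_distr[OF swap]) (simp_all add: eucl_dist_commute)
qed

lemma wasserstein_commute: "wasserstein p I P Q = wasserstein p I Q P"
proof -
  have le: "(INF C \<in> couplings I Q P. transport_cost p I C) \<le> (INF C \<in> couplings I P Q. transport_cost p I C)"
    for P Q
  proof (rule INF_greatest)
    fix C assume C: "C \<in> couplings I P Q"
    have "(INF C \<in> couplings I Q P. transport_cost p I C)
        \<le> transport_cost p I (distr C (PiM I (\<lambda>_. borel) \<Otimes>\<^sub>M PiM I (\<lambda>_. borel)) (\<lambda>w. (snd w, fst w)))"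
      using coupling_swap(1)[OF C] by (rule INF_lower)
    also have "\<dots> = transport_cost p I C"
      using coupling_swap(2)[OF C] .
    finally show "(INF C \<in> couplings I Q P. transport_cost p I C) \<le> transport_cost p I C" .
  qed
  have "(INF C \<in> couplings I P Q. transport_cost p I C) = (INF C \<in> couplings I Q P. transport_cost p I C)"
    by (intro antisym le)
  then show ?thesis
    unfolding wasserstein_transport_cost by simp
qed

lemma wasserstein_le_of_coupling:
  assumes "C \<in> couplings I P Q" "transport_cost p I C \<le> ennreal (c powr p)" "0 < p" "0 \<le> c"
  shows "wasserstein p I P Q \<le> c"
proof -
  have "(INF C \<in> couplings I P Q. transport_cost p I C) \<le> ennreal (c powr p)"
    using assms(1,2) by (meson INF_lower order_trans)
  then have "enn2real (INF C \<in> couplings I P Q. transport_cost p I C) \<le> enn2real (ennreal (c powr p))"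
    by (intro enn2real_mono) auto
  then have "enn2real (INF C \<in> couplings I P Q. transport_cost p I C) \<le> c powr p"
    by simp
  then have "wasserstein p I P Q \<le> (c powr p) powr (1 / p)"
    unfolding wasserstein_transport_cost using assms(3) by (intro powr_mono2) auto
  also have "\<dots> = c"
    using assms(3,4) by (simp add: powr_powr)
  finally show ?thesis .
qed

lemma transport_cost_Markov_inequality:
  assumes C: "sets C = sets (PiM I (\<lambda>_. borel) \<Otimes>\<^sub>M PiM I (\<lambda>_. borel))" and "0 < \<delta>" "0 < p"
  shows "emeasure C {w \<in> space C. \<delta> \<le> eucl_dist I (fst w) (snd w)}
    \<le> ennreal (1 / \<delta> powr p) * transport_cost p I C"
proof -
  let ?c = "ennreal (1 / \<delta> powr p)" and ?u = "\<lambda>w. ennreal (eucl_dist I (fst w) (snd w) powr p)"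
  have [measurable]: "?u \<in> borel_measurable C"
    unfolding measurable_cong_sets[OF C refl] by measurable
  have "1 \<le> ?c * ?u w" if "\<delta> \<le> eucl_dist I (fst w) (snd w)" for w
  proof -
    have "\<delta> powr p \<le> eucl_dist I (fst w) (snd w) powr p"
      using that \<open>0 < \<delta>\<close> \<open>0 < p\<close> by (intro powr_mono2) auto
    then have "1 \<le> 1 / \<delta> powr p * eucl_dist I (fst w) (snd w) powr p"
      using \<open>0 < \<delta>\<close> by (simp add: field_simps)
    then have "ennreal 1 \<le> ennreal (1 / \<delta> powr p * eucl_dist I (fst w) (snd w) powr p)"
      by (rule ennreal_leI)
    also have "\<dots> = ?c * ?u w"
      by (rule ennreal_mult) auto
    finally show ?thesis
      by simp
  qed
  then have "emeasure C {w \<in> space C. \<delta> \<le> eucl_dist I (fst w) (snd w)}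
      \<le> emeasure C {w \<in> space C. 1 \<le> ?c * ?u w}"
    by (intro emeasure_mono) auto
  also have "\<dots> \<le> ?c * (\<integral>\<^sup>+ w. ?u w * indicator (space C) w \<partial>C)"
    by (rule nn_integral_Markov_inequality) auto
  also have "(\<integral>\<^sup>+ w. ?u w * indicator (space C) w \<partial>C) = transport_cost p I C"
    unfolding transport_cost_def by (intro nn_integral_cong) simp
  finally show ?thesis .
qed

lemma coupling_emeasure_le:
  assumes C: "C \<in> couplings I P Q" and "0 < \<delta>" "0 < p"
    and A: "A \<in> sets (PiM I (\<lambda>_. borel))" "A' \<in> sets (PiM I (\<lambda>_. borel))"
    and near: "\<And>u v. u \<in> A \<Longrightarrow> v \<in> space (PiM I (\<lambda>_. borel)) \<Longrightarrow> eucl_dist I u v < \<delta> \<Longrightarrow> v \<in> A'"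
  shows "emeasure P A \<le> emeasure Q A' + ennreal (1 / \<delta> powr p) * transport_cost p I C"
proof -
  note C = couplingsD[OF C]
  let ?B = "PiM I (\<lambda>_. borel)"
  define far where "far = {w \<in> space C. \<delta> \<le> eucl_dist I (fst w) (snd w)}"
  have [measurable]: "fst \<in> measurable C ?B" "snd \<in> measurable C ?B"
    "(\<lambda>w. eucl_dist I (fst w) (snd w)) \<in> borel_measurable C"
    unfolding measurable_cong_sets[OF C(2) refl] by auto
  have far: "far \<in> sets C"
    unfolding far_def by measurable
  have "fst -` A \<inter> space C \<subseteq> (snd -` A' \<inter> space C) \<union> far"
    using near measurable_space[of snd C ?B] unfolding far_def by (auto simp: not_le)
  then have "emeasure C (fst -` A \<inter> space C) \<le> emeasure C (snd -` A' \<inter> space C) + emeasure C far"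
    using A far by (intro order_trans[OF emeasure_mono emeasure_subadditive]) auto
  also have "emeasure C far \<le> ennreal (1 / \<delta> powr p) * transport_cost p I C"
    unfolding far_def using C(2) \<open>0 < \<delta>\<close> \<open>0 < p\<close> by (rule transport_cost_Markov_inequality)
  finally show ?thesis
    using A C(3,4) by (simp add: emeasure_distr add_left_mono flip: C(3,4))
qed

text \<open>The coupling \<open>C0\<close> of finite cost is needed because \<^const>\<open>enn2real\<close> also maps an
  infinite infimum to 0.\<close>
lemma wasserstein_eq_0_emeasure_le:
  assumes W: "wasserstein p I P Q = 0" and "0 < p"
    and C0: "C0 \<in> couplings I P Q" "transport_cost p I C0 < \<infinity>"
    and "0 < \<delta>"
    and A: "A \<in> sets (PiM I (\<lambda>_. borel))" "A' \<in> sets (PiM I (\<lambda>_. borel))"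
    and near: "\<And>u v. u \<in> A \<Longrightarrow> v \<in> space (PiM I (\<lambda>_. borel)) \<Longrightarrow> eucl_dist I u v < \<delta> \<Longrightarrow> v \<in> A'"
  shows "emeasure P A \<le> emeasure Q A'"
proof (rule ennreal_le_epsilon)
  fix e :: real assume "0 < e"
  let ?inf = "INF C \<in> couplings I P Q. transport_cost p I C"
  have "?inf < \<infinity>"
    using C0 by (meson INF_lower le_less_trans)
  moreover have "enn2real ?inf = 0"
    using W by (simp add: wasserstein_transport_cost)
  ultimately have "?inf < ennreal (e * \<delta> powr p)"
    using \<open>0 < e\<close> \<open>0 < \<delta>\<close> by (auto simp: enn2real_eq_0_iff)
  then obtain C where C: "C \<in> couplings I P Q" "transport_cost p I C < ennreal (e * \<delta> powr p)"
    by (auto simp: INF_less_iff)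
  have "emeasure P A \<le> emeasure Q A' + ennreal (1 / \<delta> powr p) * transport_cost p I C"
    using coupling_emeasure_le[OF C(1) \<open>0 < \<delta>\<close> \<open>0 < p\<close> A near] .
  also have "ennreal (1 / \<delta> powr p) * transport_cost p I C \<le> ennreal (1 / \<delta> powr p) * ennreal (e * \<delta> powr p)"
    using C(2) by (intro mult_left_mono) auto
  also have "\<dots> = ennreal e"
    using \<open>0 < e\<close> \<open>0 < \<delta>\<close> by (simp flip: ennreal_mult)
  finally show "emeasure P A \<le> emeasure Q A' + ennreal e"
    by (simp add: add_left_mono)
qed

subsection \<open>Compact metric measure-preserving systems and their joinings\<close>

lemma cmmpsD:
  fixes M :: "'a::metric_space measure"
  assumes "cmmps M T"
  shows "prob_space M" "sets M = sets borel" "compact (UNIV :: 'a set)"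
    "T \<in> borel_measurable borel" "distr M M T = M"
proof -
  show sets: "sets M = sets borel"
    using assms unfolding cmmps_def by simp
  have "distr M M T = distr M borel T"
    using sets by (intro distr_cong) auto
  with assms show "distr M M T = M"
    unfolding cmmps_def by simp
qed (use assms in \<open>auto simp: cmmps_def\<close>)

lemma compact_UNIV_common_dist_bound:
  assumes "compact (UNIV :: 'a::metric_space set)" "compact (UNIV :: 'b::metric_space set)"
  obtains B where "0 \<le> B" "\<And>x y :: 'a. dist x y \<le> B" "\<And>x y :: 'b. dist x y \<le> B"
proof -
  obtain e1 where "\<forall>x::'a. \<forall>y. dist x y \<le> e1"
    using compact_imp_bounded[OF assms(1)] unfolding bounded_two_points by auto
  moreover obtain e2 where "\<forall>x::'b. \<forall>y. dist x y \<le> e2"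
    using compact_imp_bounded[OF assms(2)] unfolding bounded_two_points by auto
  ultimately show thesis
    by (intro that[of "max 0 (max e1 e2)"]) (simp_all add: le_max_iff_disj)
qed

lemma joiningsD:
  assumes "L \<in> joinings M N T S"
  shows "prob_space L" "sets L = sets (borel \<Otimes>\<^sub>M borel)"
    "distr L borel fst = M" "distr L borel snd = N"
  using assms unfolding joinings_def by auto

lemma pair_measure_in_joinings:
  assumes M: "cmmps M T" and N: "cmmps N S"
  shows "M \<Otimes>\<^sub>M N \<in> joinings M N T S"
proof -
  note M = cmmpsD[OF M] and N = cmmpsD[OF N]
  have "distr (M \<Otimes>\<^sub>M N) borel fst = M" "distr (M \<Otimes>\<^sub>M N) borel snd = N"
    using distr_pair_measure_marginals[OF M(1) N(1) M(2)[symmetric] N(2)[symmetric]] .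
  moreover have "distr (M \<Otimes>\<^sub>M N) (M \<Otimes>\<^sub>M N) (map_prod T S) = M \<Otimes>\<^sub>M N"
  proof -
    have "T \<in> measurable M M" "S \<in> measurable N N"
      using M(4) N(4) by (simp_all only: measurable_cong_sets[OF M(2) M(2)] measurable_cong_sets[OF N(2) N(2)])
    then have "distr M M T \<Otimes>\<^sub>M distr N N S = distr (M \<Otimes>\<^sub>M N) (M \<Otimes>\<^sub>M N) (\<lambda>(x, y). (T x, S y))"
      using N by (intro pair_measure_distr) (simp_all add: prob_space_imp_sigma_finite)
    with M N show ?thesis
      by (simp add: map_prod_def)
  qed
  moreover have "sets (M \<Otimes>\<^sub>M N) = sets (borel \<Otimes>\<^sub>M borel)"
    using M N by (intro sets_pair_measure_cong)
  ultimately show ?thesis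
    using prob_space_pair[OF M(1) N(1)] unfolding joinings_def by blast
qed

lemma joining_emeasure_Times_AE_cong:
  assumes L: "L \<in> joinings M N T S"
    and sets: "A \<in> sets borel" "A' \<in> sets borel" "B \<in> sets borel" "B' \<in> sets borel"
    and AE: "AE x in M. x \<in> A \<longleftrightarrow> x \<in> A'" "AE y in N. y \<in> B \<longleftrightarrow> y \<in> B'"
  shows "emeasure L (A \<times> B) = emeasure L (A' \<times> B')"
proof -
  note L = joiningsD[OF L]
  have meas: "measurable L = measurable (borel \<Otimes>\<^sub>M borel)"
    by (intro ext measurable_cong_sets[OF L(2) refl])
  have [measurable]: "fst \<in> borel_measurable L" "snd \<in> borel_measurable L"
    unfolding meas by auto
  have "AE w in L. fst w \<in> A \<longleftrightarrow> fst w \<in> A'"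
    using AE(1) sets unfolding L(3)[symmetric] by (subst (asm) AE_distr_iff) auto
  moreover have "AE w in L. snd w \<in> B \<longleftrightarrow> snd w \<in> B'"
    using AE(2) sets unfolding L(4)[symmetric] by (subst (asm) AE_distr_iff) auto
  ultimately have "AE w in L. w \<in> A \<times> B \<longleftrightarrow> w \<in> A' \<times> B'"
    by eventually_elim (auto simp: mem_Times_iff)
  then show ?thesis
    using sets by (intro emeasure_eq_AE) (auto simp: L(2))
qed

lemma ball_subset_ball_dist:
  assumes "dist x y + r \<le> e"
  shows "ball y r \<subseteq> ball x e"
proof
  fix z assume "z \<in> ball y r"
  with assms dist_triangle[of x z y] show "z \<in> ball x e"
    by simp
qed

lemma AE_in_supp:
  fixes M :: "'a::metric_space measure"
  assumes "compact (UNIV :: 'a set)" "sets M = sets borel"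
  shows "AE x in M. x \<in> supp M"
proof -
  let ?r = "\<lambda>k::nat. inverse (real (Suc k))"
  have totally_bounded: "\<forall>e>0. \<exists>D. finite D \<and> (UNIV :: 'a set) \<subseteq> (\<Union>d\<in>D. ball d e)"
    using assms(1) unfolding compact_eq_totally_bounded by (rule conjunct2)
  have "\<forall>k. \<exists>D. finite D \<and> (UNIV :: 'a set) \<subseteq> (\<Union>d\<in>D. ball d (?r k))"
  proof
    fix k
    show "\<exists>D. finite D \<and> (UNIV :: 'a set) \<subseteq> (\<Union>d\<in>D. ball d (?r k))"
      by (rule totally_bounded[rule_format]) simp
  qed
  from choice[OF this] obtain D where D: "\<And>k. finite (D k)" "\<And>k. (UNIV :: 'a set) \<subseteq> (\<Union>d\<in>D k. ball d (?r k))"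
    by blast
  define N0 where "N0 = (\<Union>k. \<Union>d\<in>{d \<in> D k. emeasure M (ball d (?r k)) = 0}. ball d (?r k))"
  have null: "N0 \<in> null_sets M"
    unfolding N0_def using D(1) assms(2)
    by (intro null_sets_UN' null_sets_UN) (auto intro: countable_finite)
  have "UNIV - supp M \<subseteq> N0"
  proof
    fix x assume "x \<in> UNIV - supp M"
    then obtain U where U: "open U" "x \<in> U" "emeasure M U = 0"
      unfolding supp_def by (auto simp: not_gr_zero)
    obtain e where "0 < e" "ball x e \<subseteq> U"
      using U open_contains_ball by blast
    obtain k where k: "?r k < e / 2"
      using reals_Archimedean[of "e / 2"] \<open>0 < e\<close> by auto
    obtain d where d: "d \<in> D k" "x \<in> ball d (?r k)"
      using D(2)[of k] by blast
    have "ball d (?r k) \<subseteq> ball x e"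
      using d k by (intro ball_subset_ball_dist) (simp add: dist_commute)
    then have "emeasure M (ball d (?r k)) = 0"
      using \<open>ball x e \<subseteq> U\<close> U assms(2) emeasure_mono[of "ball d (?r k)" U M] by simp
    with d show "x \<in> N0"
      unfolding N0_def by blast
  qed
  then show ?thesis
    using sets_eq_imp_space_eq[OF assms(2)] by (intro AE_I'[OF null]) auto
qed

subsection \<open>Cells cut out by the anchors\<close>

definition anchor_cell :: "(nat \<Rightarrow> 'a::metric_space) \<Rightarrow> nat set \<Rightarrow> (nat \<Rightarrow> real) \<Rightarrow> 'a set"
  where "anchor_cell as F c = (\<Inter>r\<in>F. ball (as r) (c r))"

definition anchor_cells :: "(nat \<Rightarrow> 'a::metric_space) \<Rightarrow> 'a set set"
  where "anchor_cells as = {anchor_cell as F c | F c. finite F \<and> F \<subseteq> {1..}}"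

definition anchor_rects :: "(nat \<Rightarrow> 'a::metric_space) \<Rightarrow> (nat \<Rightarrow> 'b::metric_space) \<Rightarrow> ('a \<times> 'b) set set"
  where "anchor_rects as bs = {A \<times> B | A B. A \<in> anchor_cells as \<and> B \<in> anchor_cells bs}"

lemma anchor_cell_borel: "finite F \<Longrightarrow> anchor_cell as F c \<in> sets borel"
  unfolding anchor_cell_def by (intro borel_open open_INT) auto

lemma anchor_cells_borel: "anchor_cells as \<subseteq> sets borel"
  unfolding anchor_cells_def using anchor_cell_borel by blast

lemma UNIV_in_anchor_cells: "UNIV \<in> anchor_cells as"
  unfolding anchor_cells_def anchor_cell_def by blast

lemma ball_in_anchor_cells: "1 \<le> r \<Longrightarrow> ball (as r) e \<in> anchor_cells as"
  unfolding anchor_cells_def anchor_cell_def by (intro CollectI exI[of _ "{r}"] exI[of _ "\<lambda>_. e"]) auto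

lemma mem_anchor_cell: "x \<in> anchor_cell as F c \<longleftrightarrow> (\<forall>r\<in>F. dist (as r) x < c r)"
  unfolding anchor_cell_def by simp

lemma Int_stable_anchor_cells: "Int_stable (anchor_cells as)"
proof (rule Int_stableI)
  fix A A' assume "A \<in> anchor_cells as" "A' \<in> anchor_cells as"
  then obtain F c F' c' where A: "A = anchor_cell as F c" "finite F" "F \<subseteq> {1..}"
    and A': "A' = anchor_cell as F' c'" "finite F'" "F' \<subseteq> {1..}"
    unfolding anchor_cells_def by blast
  define c'' where "c'' r = (if r \<in> F then if r \<in> F' then min (c r) (c' r) else c r else c' r)" for r
  have "(\<forall>r\<in>F. d r < c r) \<and> (\<forall>r\<in>F'. d r < c' r) \<longleftrightarrow> (\<forall>r\<in>F \<union> F'. d r < c'' r)" for d :: "nat \<Rightarrow> real"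
    unfolding c''_def by auto
  then have "A \<inter> A' = anchor_cell as (F \<union> F') c''"
    unfolding A A' by (intro set_eqI) (simp only: Int_iff mem_anchor_cell)
  with A A' show "A \<inter> A' \<in> anchor_cells as"
    unfolding anchor_cells_def by blast
qed

lemma Int_stable_anchor_rects: "Int_stable (anchor_rects as bs)"
proof (rule Int_stableI)
  fix X Y assume "X \<in> anchor_rects as bs" "Y \<in> anchor_rects as bs"
  then obtain A B A' B' where "X = A \<times> B" "Y = A' \<times> B'"
    and "A \<in> anchor_cells as" "A' \<in> anchor_cells as" "B \<in> anchor_cells bs" "B' \<in> anchor_cells bs"
    unfolding anchor_rects_def by blast
  then show "X \<inter> Y \<in> anchor_rects as bs"
    using Int_stable_anchor_cells[of as] Int_stable_anchor_cells[of bs]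
    unfolding anchor_rects_def by (auto simp: Times_Int_Times dest: Int_stableD)
qed

lemma anchor_rects_borel: "anchor_rects as bs \<subseteq> sets (borel \<Otimes>\<^sub>M borel)"
  unfolding anchor_rects_def using anchor_cells_borel[of as] anchor_cells_borel[of bs]
  by (auto intro!: pair_measureI)

lemma Times_in_sigma_anchor_rects:
  assumes "A \<in> sigma_sets UNIV (anchor_cells as)" "B \<in> sigma_sets UNIV (anchor_cells bs)"
  shows "A \<times> B \<in> sigma_sets UNIV (anchor_rects as bs)"
proof -
  have eq: "sigma UNIV (anchor_cells as) \<Otimes>\<^sub>M sigma UNIV (anchor_cells bs) = sigma UNIV (anchor_rects as bs)"
    unfolding anchor_rects_def UNIV_Times_UNIV[symmetric]
    using UNIV_in_anchor_cells[of as] UNIV_in_anchor_cells[of bs]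
    by (intro sigma_prod) (auto intro!: exI[of _ "{UNIV}"])
  have "A \<times> B \<in> sets (sigma UNIV (anchor_cells as) \<Otimes>\<^sub>M sigma UNIV (anchor_cells bs))"
    using assms by (intro pair_measureI) auto
  then show ?thesis
    unfolding eq by simp
qed

lemma anchor_cell_mono: "(\<And>r. r \<in> F \<Longrightarrow> c r \<le> c' r) \<Longrightarrow> anchor_cell as F c \<subseteq> anchor_cell as F c'"
  unfolding subset_iff mem_anchor_cell by (meson less_le_trans)

lemma eventually_in_shrunk_anchor_cell:
  assumes "finite F" "x \<in> anchor_cell as F c"
  shows "eventually (\<lambda>n. x \<in> anchor_cell as F (\<lambda>r. c r - inverse (real (Suc n)))) sequentially"
proof -
  have "eventually (\<lambda>n. dist (as r) x < c r - inverse (real (Suc n))) sequentially" if "r \<in> F" for r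
  proof -
    have "0 < c r - dist (as r) x"
      using assms(2) that by (simp add: mem_anchor_cell)
    from order_tendstoD(2)[OF LIMSEQ_inverse_real_of_nat this] show ?thesis
      by eventually_elim linarith
  qed
  then show ?thesis
    unfolding mem_anchor_cell using assms(1) by (intro eventually_ball_finite) auto
qed

lemma emeasure_anchor_rect_le_of_shrunk:
  assumes K: "sets K = sets (borel \<Otimes>\<^sub>M borel)" and "finite F" "finite G"
    and le: "\<And>\<delta>. 0 < \<delta> \<Longrightarrow>
      emeasure K (anchor_cell as F (\<lambda>r. c r - \<delta>) \<times> anchor_cell bs G (\<lambda>r. s r - \<delta>)) \<le> y"
  shows "emeasure K (anchor_cell as F c \<times> anchor_cell bs G s) \<le> y"
proof -
  define A where "A n = anchor_cell as F (\<lambda>r. c r - inverse (real (Suc n)))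
    \<times> anchor_cell bs G (\<lambda>r. s r - inverse (real (Suc n)))" for n
  have "range A \<subseteq> sets K"
    unfolding A_def K using \<open>finite F\<close> \<open>finite G\<close> by (auto intro!: pair_measureI anchor_cell_borel)
  moreover have "incseq A"
  proof (rule incseq_SucI)
    fix n
    have "inverse (real (Suc (Suc n))) \<le> inverse (real (Suc n))"
      by (simp add: field_simps)
    then show "A n \<subseteq> A (Suc n)"
      unfolding A_def by (intro Sigma_mono anchor_cell_mono) auto
  qed
  moreover have "(\<Union>n. A n) = anchor_cell as F c \<times> anchor_cell bs G s"
  proof
    show "(\<Union>n. A n) \<subseteq> anchor_cell as F c \<times> anchor_cell bs G s"
      unfolding A_def by (intro UN_least Sigma_mono anchor_cell_mono) auto
    show "anchor_cell as F c \<times> anchor_cell bs G s \<subseteq> (\<Union>n. A n)"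
    proof
      fix w assume "w \<in> anchor_cell as F c \<times> anchor_cell bs G s"
      then have "eventually (\<lambda>n. w \<in> A n) sequentially"
        unfolding A_def mem_Times_iff
        using \<open>finite F\<close> \<open>finite G\<close> by (intro eventually_conj eventually_in_shrunk_anchor_cell) auto
      then show "w \<in> (\<Union>n. A n)"
        unfolding eventually_sequentially by blast
    qed
  qed
  ultimately have "emeasure K (anchor_cell as F c \<times> anchor_cell bs G s) = (SUP n. emeasure K (A n))"
    by (metis SUP_emeasure_incseq)
  also have "\<dots> \<le> y"
    unfolding A_def by (intro SUP_least le) simp
  finally show ?thesis .
qed

lemma open_approx_sigma_anchor_cells:
  assumes "open U"
  obtains U' where "U' \<in> sigma_sets UNIV (anchor_cells as)" "U' \<subseteq> U" "U \<inter> closure (as ` {1..}) \<subseteq> U'"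
proof -
  interpret S: sigma_algebra UNIV "sigma_sets UNIV (anchor_cells as)"
    by (rule sigma_algebra_sigma_sets) simp
  let ?r = "\<lambda>n::nat. inverse (real (Suc n))"
  define balls where "balls = {ball (as r) (?r n) | r n. 1 \<le> r \<and> ball (as r) (?r n) \<subseteq> U}"
  have "\<Union>balls \<in> sigma_sets UNIV (anchor_cells as)"
  proof (rule S.countable_Union)
    have "balls \<subseteq> (\<lambda>(r, n). ball (as r) (?r n)) ` UNIV"
      unfolding balls_def by auto
    then show "countable balls"
      by (rule countable_subset) simp
    show "balls \<subseteq> sigma_sets UNIV (anchor_cells as)"
      unfolding balls_def using ball_in_anchor_cells by blast
  qed
  moreover have "U \<inter> closure (as ` {1..}) \<subseteq> \<Union>balls"
  proof
    fix x assume x: "x \<in> U \<inter> closure (as ` {1..})"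
    obtain e where "0 < e" "ball x e \<subseteq> U"
      using assms x open_contains_ball by force
    obtain n where n: "?r n < e / 2"
      using reals_Archimedean[of "e / 2"] \<open>0 < e\<close> by auto
    have "x \<in> closure (as ` {1..})" "0 < ?r n"
      using x by auto
    then obtain y where "y \<in> as ` {1..}" "dist y x < ?r n"
      unfolding closure_approachable by blast
    then obtain r where r: "1 \<le> r" "dist (as r) x < ?r n"
      by auto
    have "ball (as r) (?r n) \<subseteq> U"
      using r n \<open>ball x e \<subseteq> U\<close> ball_subset_ball_dist[of x "as r" "?r n" e] by (simp add: dist_commute)
    with r(1) have "ball (as r) (?r n) \<in> balls"
      unfolding balls_def by blast
    moreover have "x \<in> ball (as r) (?r n)"
      using r(2) by simp
    ultimately show "x \<in> \<Union>balls"
      by blast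
  qed
  moreover have "\<Union>balls \<subseteq> U"
    unfolding balls_def by auto
  ultimately show thesis
    using that by blast
qed

text \<open>Outside the support there is nothing to approximate, so density of the anchors in the
  support suffices.\<close>
lemma AE_eq_sigma_anchor_cells:
  fixes M :: "'a::metric_space measure"
  assumes "compact (UNIV :: 'a set)" "sets M = sets borel"
    and dense: "supp M \<subseteq> closure (as ` {1..})" and "A \<in> sets borel"
  shows "\<exists>A' \<in> sigma_sets UNIV (anchor_cells as). AE x in M. x \<in> A \<longleftrightarrow> x \<in> A'"
proof -
  have supp: "AE x in M. x \<in> supp M"
    by (rule AE_in_supp[OF assms(1,2)])
  have "A \<in> sigma_sets UNIV (Collect open)"
    using assms(4) by (simp add: sets_borel)
  then show ?thesis
  proof (induction rule: sigma_sets.induct)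
    case (Basic U)
    then have "open U"
      by simp
    then obtain U' where "U' \<in> sigma_sets UNIV (anchor_cells as)" "U' \<subseteq> U"
      "U \<inter> closure (as ` {1..}) \<subseteq> U'"
      by (rule open_approx_sigma_anchor_cells)
    with supp dense show ?case
      by (intro bexI[of _ U']) (auto elim!: eventually_mono)
  next
    case Empty
    show ?case
      by (intro bexI[of _ "{}"]) (auto intro: sigma_sets.Empty)
  next
    case (Compl a)
    then obtain a' where "a' \<in> sigma_sets UNIV (anchor_cells as)" "AE x in M. x \<in> a \<longleftrightarrow> x \<in> a'"
      by blast
    then show ?case
      by (intro bexI[of _ "UNIV - a'"]) (auto elim!: eventually_mono intro: sigma_sets.Compl)
  next
    case (Union a)
    then obtain a' where a': "\<And>i. a' i \<in> sigma_sets UNIV (anchor_cells as)"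
      "\<And>i. AE x in M. x \<in> a i \<longleftrightarrow> x \<in> a' i"
      by metis
    then have "AE x in M. \<forall>i. x \<in> a i \<longleftrightarrow> x \<in> a' i"
      by (simp add: AE_all_countable)
    then show ?case
      using a'(1) by (intro bexI[of _ "\<Union>i. a' i"]) (auto elim!: eventually_mono intro: sigma_sets.Union)
  qed
qed

subsection \<open>Distance arrays\<close>

lemma finite_aidx_set: "finite (aidx_set n m R)"
proof -
  have "{DX i j a b | i j a b. i \<in> {1..n} \<and> j \<in> {1..n} \<and> a < m \<and> b < m}
      = (\<lambda>(i, j, a, b). DX i j a b) ` ({1..n} \<times> {1..n} \<times> {..<m} \<times> {..<m})"
    "{DY i j a b | i j a b. i \<in> {1..n} \<and> j \<in> {1..n} \<and> a < m \<and> b < m}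
      = (\<lambda>(i, j, a, b). DY i j a b) ` ({1..n} \<times> {1..n} \<times> {..<m} \<times> {..<m})"
    "{AX i a r | i a r. i \<in> {1..n} \<and> a < m \<and> r \<in> {1..R}}
      = (\<lambda>(i, a, r). AX i a r) ` ({1..n} \<times> {..<m} \<times> {1..R})"
    "{AY i a r | i a r. i \<in> {1..n} \<and> a < m \<and> r \<in> {1..R}}
      = (\<lambda>(i, a, r). AY i a r) ` ({1..n} \<times> {..<m} \<times> {1..R})"
    by (auto simp: image_iff)
  then show ?thesis
    unfolding aidx_set_def by simp
qed

lemma dep_array_bounds:
  fixes as :: "nat \<Rightarrow> 'a::metric_space" and bs :: "nat \<Rightarrow> 'b::metric_space"
  assumes "\<And>x y :: 'a. dist x y \<le> B" "\<And>x y :: 'b. dist x y \<le> B" "k \<in> aidx_set n m R"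
  shows "0 \<le> dep_array n m R T S as bs z k" "dep_array n m R T S as bs z k \<le> B"
  using assms unfolding dep_array_def by (cases k; simp)+

lemma sets_array_law [simp]:
  "sets (array_law n m R T S as bs K) = sets (PiM (aidx_set n m R) (\<lambda>_. borel))"
  by (simp add: array_law_def)

definition array_cell :: "nat \<Rightarrow> nat set \<Rightarrow> (nat \<Rightarrow> real) \<Rightarrow> nat set \<Rightarrow> (nat \<Rightarrow> real) \<Rightarrow> (aidx \<Rightarrow> real) set"
  where "array_cell R F c G s = {u \<in> space (PiM (aidx_set 1 1 R) (\<lambda>_. borel)).
    (\<forall>r\<in>F. u (AX 1 0 r) < c r) \<and> (\<forall>r\<in>G. u (AY 1 0 r) < s r)}"

lemma dep_array_in_array_cell_iff:
  assumes "F \<subseteq> {1..R}" "G \<subseteq> {1..R}"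
  shows "dep_array 1 1 R T S as bs z \<in> array_cell R F c G s
    \<longleftrightarrow> z 1 \<in> anchor_cell as F c \<times> anchor_cell bs G s"
proof -
  have "AX 1 0 r \<in> aidx_set 1 1 R" if "r \<in> F" for r
    using that assms(1) unfolding aidx_set_def by auto
  moreover have "AY 1 0 r \<in> aidx_set 1 1 R" if "r \<in> G" for r
    using that assms(2) unfolding aidx_set_def by auto
  ultimately show ?thesis
    unfolding array_cell_def dep_array_def
    by (auto simp: mem_anchor_cell mem_Times_iff dist_commute space_PiM)
qed

lemma array_cell_sets:
  assumes "F \<subseteq> {1..R}" "G \<subseteq> {1..R}"
  shows "array_cell R F c G s \<in> sets (PiM (aidx_set 1 1 R) (\<lambda>_. borel))"
proof -
  have [measurable]: "AX 1 0 r \<in> aidx_set 1 1 R" if "r \<in> F" for r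
    using that assms(1) unfolding aidx_set_def by auto
  have [measurable]: "AY 1 0 r \<in> aidx_set 1 1 R" if "r \<in> G" for r
    using that assms(2) unfolding aidx_set_def by auto
  have "finite F" "finite G"
    using finite_subset[OF assms(1)] finite_subset[OF assms(2)] by simp_all
  then show ?thesis
    unfolding array_cell_def by measurable
qed

lemma array_cell_near:
  assumes "F \<subseteq> {1..R}" "G \<subseteq> {1..R}"
    and u: "u \<in> array_cell R F (\<lambda>r. c r - \<delta>) G (\<lambda>r. s r - \<delta>)"
    and v: "v \<in> space (PiM (aidx_set 1 1 R) (\<lambda>_. borel))" "eucl_dist (aidx_set 1 1 R) u v < \<delta>"
  shows "v \<in> array_cell R F c G s"
proof -
  have "\<bar>u k - v k\<bar> < \<delta>" if "k \<in> aidx_set 1 1 R" for k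
    using abs_le_eucl_dist[OF finite_aidx_set that, of u v] v(2) by linarith
  moreover have "AX 1 0 r \<in> aidx_set 1 1 R" if "r \<in> F" for r
    using that assms(1) unfolding aidx_set_def by auto
  moreover have "AY 1 0 r \<in> aidx_set 1 1 R" if "r \<in> G" for r
    using that assms(2) unfolding aidx_set_def by auto
  ultimately show ?thesis
    using u v(1) unfolding array_cell_def by (force simp: abs_less_iff)
qed

lemma aidx_set_1_1:
  "aidx_set 1 1 R = {DX 1 1 0 0, DY 1 1 0 0} \<union> (\<lambda>r. AX 1 0 r) ` {1..R} \<union> (\<lambda>r. AY 1 0 r) ` {1..R}"
  unfolding aidx_set_def by auto

text \<open>Only one point and no time shift: for general \<open>n\<close> and \<open>m\<close> the entries
  \<open>dist (f z) (g z)\<close> need not be Borel, as the metric types are not assumed second countable.\<close>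
lemma measurable_dep_array_1_1:
  fixes as :: "nat \<Rightarrow> 'a::metric_space" and bs :: "nat \<Rightarrow> 'b::metric_space"
  assumes "sets K = sets (borel \<Otimes>\<^sub>M borel)"
  shows "dep_array 1 1 R T S as bs \<in> measurable (PiM {1..1} (\<lambda>_. K)) (PiM (aidx_set 1 1 R) (\<lambda>_. borel))"
proof -
  have [measurable]: "fst \<in> borel_measurable K" "snd \<in> borel_measurable K"
    by (simp_all add: measurable_cong_sets[OF assms refl])
  have [measurable]: "(\<lambda>x::'a. dist x (as r)) \<in> borel_measurable borel"
    "(\<lambda>y::'b. dist y (bs r)) \<in> borel_measurable borel" for r
    by (intro borel_measurable_continuous_onI continuous_intros)+
  show ?thesis
    unfolding dep_array_def
  proof (rule measurable_restrict)
    fix k assume "k \<in> aidx_set 1 1 R"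
    then show "(\<lambda>z. case k of
        DX i j a b \<Rightarrow> dist ((T ^^ a) (fst (z i))) ((T ^^ b) (fst (z j)))
      | AX i a r \<Rightarrow> dist ((T ^^ a) (fst (z i))) (as r)
      | DY i j a b \<Rightarrow> dist ((S ^^ a) (snd (z i))) ((S ^^ b) (snd (z j)))
      | AY i a r \<Rightarrow> dist ((S ^^ a) (snd (z i))) (bs r)) \<in> borel_measurable (PiM {1..1} (\<lambda>_. K))"
      unfolding aidx_set_1_1 by (elim UnE imageE insertE emptyE; simp; measurable)
  qed
qed

lemma prob_space_array_law_1_1:
  assumes "prob_space K" "sets K = sets (borel \<Otimes>\<^sub>M borel)"
  shows "prob_space (array_law 1 1 R T S as bs K)"
  unfolding array_law_def using assms
  by (intro prob_space.prob_space_distr prob_space_PiM measurable_dep_array_1_1) auto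

lemma array_laws_pair_in_couplings:
  assumes "prob_space K1" "sets K1 = sets (borel \<Otimes>\<^sub>M borel)"
    and "prob_space K2" "sets K2 = sets (borel \<Otimes>\<^sub>M borel)"
  shows "array_law 1 1 R T S as bs K1 \<Otimes>\<^sub>M array_law 1 1 R T S as bs K2
    \<in> couplings (aidx_set 1 1 R) (array_law 1 1 R T S as bs K1) (array_law 1 1 R T S as bs K2)"
  using assms by (intro couplings_pair_measure prob_space_array_law_1_1) auto

lemma transport_cost_array_laws_le:
  fixes as :: "nat \<Rightarrow> 'a::metric_space" and bs :: "nat \<Rightarrow> 'b::metric_space" and R :: nat
  assumes K1: "prob_space K1" "sets K1 = sets (borel \<Otimes>\<^sub>M borel)"
    and K2: "prob_space K2" "sets K2 = sets (borel \<Otimes>\<^sub>M borel)"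
    and B: "0 \<le> B" "\<And>x y :: 'a. dist x y \<le> B" "\<And>x y :: 'b. dist x y \<le> B" and "0 < p"
  defines "I \<equiv> aidx_set 1 1 R"
  shows "transport_cost p I (array_law 1 1 R T S as bs K1 \<Otimes>\<^sub>M array_law 1 1 R T S as bs K2)
    \<le> ennreal ((sqrt (card I) * B) powr p)"
proof -
  let ?B = "PiM I (\<lambda>_. borel)" and ?f = "dep_array 1 1 R T S as bs"
  let ?P1 = "PiM {1..1::nat} (\<lambda>_. K1)" and ?P2 = "PiM {1..1::nat} (\<lambda>_. K2)"
  have f: "?f \<in> measurable ?P1 ?B" "?f \<in> measurable ?P2 ?B"
    unfolding I_def by (intro measurable_dep_array_1_1 K1(2) K2(2))+
  have "array_law 1 1 R T S as bs K1 \<Otimes>\<^sub>M array_law 1 1 R T S as bs K2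
      = distr (?P1 \<Otimes>\<^sub>M ?P2) (?B \<Otimes>\<^sub>M ?B) (\<lambda>(x, y). (?f x, ?f y))"
    unfolding array_law_def I_def using f K2
    by (intro pair_measure_distr prob_space_imp_sigma_finite prob_space_array_law_1_1[unfolded array_law_def])
      (simp_all add: I_def)
  then have "transport_cost p I (array_law 1 1 R T S as bs K1 \<Otimes>\<^sub>M array_law 1 1 R T S as bs K2)
      = (\<integral>\<^sup>+ w. ennreal (eucl_dist I (?f (fst w)) (?f (snd w)) powr p) \<partial>(?P1 \<Otimes>\<^sub>M ?P2))"
    unfolding transport_cost_def using f by (simp add: nn_integral_distr case_prod_beta)
  also have "\<dots> \<le> (\<integral>\<^sup>+ w. ennreal ((sqrt (card I) * B) powr p) \<partial>(?P1 \<Otimes>\<^sub>M ?P2))"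
  proof (rule nn_integral_mono)
    fix w
    have "\<bar>?f (fst w) k - ?f (snd w) k\<bar> \<le> B" if "k \<in> I" for k
      using dep_array_bounds[OF B(2,3) that[unfolded I_def], where T = T and S = S and as = as and bs = bs
          and z = "fst w"]
        dep_array_bounds[OF B(2,3) that[unfolded I_def], where T = T and S = S and as = as and bs = bs
          and z = "snd w"]
      by (simp add: abs_le_iff)
    then have "eucl_dist I (?f (fst w)) (?f (snd w)) \<le> sqrt (card I) * B"
      unfolding I_def using B(1) by (intro eucl_dist_le_sqrt_card finite_aidx_set) auto
    then show "ennreal (eucl_dist I (?f (fst w)) (?f (snd w)) powr p) \<le> ennreal ((sqrt (card I) * B) powr p)"
      using \<open>0 < p\<close> by (intro ennreal_leI powr_mono2) (auto simp: eucl_dist_nonneg)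
  qed
  also have "\<dots> = ennreal ((sqrt (card I) * B) powr p)"
    using K1(1) K2(1) by (simp add: prob_space.emeasure_space_1 prob_space_pair prob_space_PiM)
  finally show ?thesis .
qed

lemma wasserstein_array_laws_le:
  fixes as :: "nat \<Rightarrow> 'a::metric_space" and bs :: "nat \<Rightarrow> 'b::metric_space"
  assumes "prob_space K1" "sets K1 = sets (borel \<Otimes>\<^sub>M borel)"
    and "prob_space K2" "sets K2 = sets (borel \<Otimes>\<^sub>M borel)"
    and "0 \<le> B" "\<And>x y :: 'a. dist x y \<le> B" "\<And>x y :: 'b. dist x y \<le> B" and "0 < p"
  shows "wasserstein p (aidx_set 1 1 R) (array_law 1 1 R T S as bs K1) (array_law 1 1 R T S as bs K2)
    \<le> sqrt (card (aidx_set 1 1 R)) * B"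
  using assms
  by (intro wasserstein_le_of_coupling[OF array_laws_pair_in_couplings transport_cost_array_laws_le]) auto

lemma emeasure_array_law_cell:
  assumes K: "prob_space K" "sets K = sets (borel \<Otimes>\<^sub>M borel)"
    and FG: "F \<subseteq> {1..R}" "G \<subseteq> {1..R}"
  shows "emeasure (array_law 1 1 R T S as bs K) (array_cell R F c G s)
    = emeasure K (anchor_cell as F c \<times> anchor_cell bs G s)"
proof -
  let ?P = "PiM {1..1::nat} (\<lambda>_. K)" and ?f = "dep_array 1 1 R T S as bs"
  let ?X = "anchor_cell as F c \<times> anchor_cell bs G s"
  have f: "?f \<in> measurable ?P (PiM (aidx_set 1 1 R) (\<lambda>_. borel))"
    by (rule measurable_dep_array_1_1[OF K(2)])
  have z1: "(\<lambda>z. z 1) \<in> measurable ?P K"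
    by (rule measurable_component_singleton) simp
  have "finite F" "finite G"
    using finite_subset[OF FG(1)] finite_subset[OF FG(2)] by simp_all
  then have X: "?X \<in> sets K"
    unfolding K(2) by (intro pair_measureI anchor_cell_borel)
  have "emeasure (array_law 1 1 R T S as bs K) (array_cell R F c G s)
      = emeasure ?P (?f -` array_cell R F c G s \<inter> space ?P)"
    unfolding array_law_def using f array_cell_sets[OF FG] by (rule emeasure_distr)
  also have "?f -` array_cell R F c G s \<inter> space ?P = (\<lambda>z. z 1) -` ?X \<inter> space ?P"
    by (intro set_eqI) (simp only: Int_iff vimage_eq dep_array_in_array_cell_iff[OF FG])
  also have "emeasure ?P \<dots> = emeasure (distr ?P K (\<lambda>z. z 1)) ?X"
    using z1 X by (rule emeasure_distr[symmetric])
  also have "distr ?P K (\<lambda>z. z 1) = K"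
    using K(1) by (intro distr_PiM_component) simp_all
  finally show ?thesis .
qed

lemma emeasure_anchor_rect_le_of_wasserstein_eq_0:
  fixes as :: "nat \<Rightarrow> 'a::metric_space" and bs :: "nat \<Rightarrow> 'b::metric_space"
  assumes K1: "prob_space K1" "sets K1 = sets (borel \<Otimes>\<^sub>M borel)"
    and K2: "prob_space K2" "sets K2 = sets (borel \<Otimes>\<^sub>M borel)"
    and B: "0 \<le> B" "\<And>x y :: 'a. dist x y \<le> B" "\<And>x y :: 'b. dist x y \<le> B" and "0 < p"
    and W: "wasserstein p (aidx_set 1 1 R) (array_law 1 1 R T S as bs K1) (array_law 1 1 R T S as bs K2) = 0"
    and FG: "F \<subseteq> {1..R}" "G \<subseteq> {1..R}"
  shows "emeasure K1 (anchor_cell as F c \<times> anchor_cell bs G s)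
    \<le> emeasure K2 (anchor_cell as F c \<times> anchor_cell bs G s)"
proof (rule emeasure_anchor_rect_le_of_shrunk[OF K1(2)])
  show "finite F" "finite G"
    using finite_subset[OF FG(1)] finite_subset[OF FG(2)] by simp_all
  fix \<delta> :: real assume "0 < \<delta>"
  note C0 = array_laws_pair_in_couplings[OF K1 K2, of R T S as bs]
    transport_cost_array_laws_le[OF K1 K2 B \<open>0 < p\<close>, of R T S as bs]
  have "transport_cost p (aidx_set 1 1 R)
      (array_law 1 1 R T S as bs K1 \<Otimes>\<^sub>M array_law 1 1 R T S as bs K2) < \<infinity>"
    using le_less_trans[OF C0(2) ennreal_less_top] by simp
  have "emeasure K1 (anchor_cell as F (\<lambda>r. c r - \<delta>) \<times> anchor_cell bs G (\<lambda>r. s r - \<delta>))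
      = emeasure (array_law 1 1 R T S as bs K1) (array_cell R F (\<lambda>r. c r - \<delta>) G (\<lambda>r. s r - \<delta>))"
    by (rule emeasure_array_law_cell[OF K1 FG, symmetric])
  also have "\<dots> \<le> emeasure (array_law 1 1 R T S as bs K2) (array_cell R F c G s)"
    by (rule wasserstein_eq_0_emeasure_le[OF W \<open>0 < p\<close> C0(1) \<open>_ < \<infinity>\<close> \<open>0 < \<delta>\<close>
          array_cell_sets[OF FG] array_cell_sets[OF FG] array_cell_near[OF FG]])
  also have "\<dots> = emeasure K2 (anchor_cell as F c \<times> anchor_cell bs G s)"
    by (rule emeasure_array_law_cell[OF K2 FG])
  finally show "emeasure K1 (anchor_cell as F (\<lambda>r. c r - \<delta>) \<times> anchor_cell bs G (\<lambda>r. s r - \<delta>))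
      \<le> emeasure K2 (anchor_cell as F c \<times> anchor_cell bs G s)" .
qed

lemma emeasure_anchor_rects_eq_of_wasserstein_eq_0:
  fixes as :: "nat \<Rightarrow> 'a::metric_space" and bs :: "nat \<Rightarrow> 'b::metric_space"
  assumes K1: "prob_space K1" "sets K1 = sets (borel \<Otimes>\<^sub>M borel)"
    and K2: "prob_space K2" "sets K2 = sets (borel \<Otimes>\<^sub>M borel)"
    and B: "0 \<le> B" "\<And>x y :: 'a. dist x y \<le> B" "\<And>x y :: 'b. dist x y \<le> B" and "0 < p"
    and W: "\<And>R. 1 \<le> R \<Longrightarrow>
      wasserstein p (aidx_set 1 1 R) (array_law 1 1 R T S as bs K1) (array_law 1 1 R T S as bs K2) = 0"
    and X: "X \<in> anchor_rects as bs"
  shows "emeasure K1 X = emeasure K2 X"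
proof -
  obtain F c G s where X: "X = anchor_cell as F c \<times> anchor_cell bs G s"
    and F: "finite F" "F \<subseteq> {1..}" and G: "finite G" "G \<subseteq> {1..}"
    using X unfolding anchor_rects_def anchor_cells_def by blast
  define R where "R = Max (insert 1 (F \<union> G))"
  have FG: "F \<subseteq> {1..R}" "G \<subseteq> {1..R}" and "1 \<le> R"
    using F G unfolding R_def by (auto intro: Max_ge)
  from \<open>1 \<le> R\<close> have W12: "wasserstein p (aidx_set 1 1 R) (array_law 1 1 R T S as bs K1) (array_law 1 1 R T S as bs K2) = 0"
    by (rule W)
  then have W21: "wasserstein p (aidx_set 1 1 R) (array_law 1 1 R T S as bs K2) (array_law 1 1 R T S as bs K1) = 0"
    by (subst wasserstein_commute)
  show ?thesis
    unfolding X
    using emeasure_anchor_rect_le_of_wasserstein_eq_0[OF K1 K2 B \<open>0 < p\<close> W12 FG]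
      emeasure_anchor_rect_le_of_wasserstein_eq_0[OF K2 K1 B \<open>0 < p\<close> W21 FG]
    by (rule antisym)
qed

lemma wasserstein_le_Dep_1_1:
  fixes M :: "'a::metric_space measure" and N :: "'b::metric_space measure"
  assumes "cmmps M T" "cmmps N S" "L \<in> joinings M N T S" "0 < p"
  shows "wasserstein p (aidx_set 1 1 R) (array_law 1 1 R T S as bs L) (array_law 1 1 R T S as bs (M \<Otimes>\<^sub>M N))
    \<le> Dep 1 1 R p M N T S as bs"
proof -
  let ?W = "\<lambda>L. wasserstein p (aidx_set 1 1 R) (array_law 1 1 R T S as bs L) (array_law 1 1 R T S as bs (M \<Otimes>\<^sub>M N))"
  obtain B where B: "0 \<le> B" "\<And>x y :: 'a. dist x y \<le> B" "\<And>x y :: 'b. dist x y \<le> B"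
    using compact_UNIV_common_dist_bound[OF cmmpsD(3)[OF assms(1)] cmmpsD(3)[OF assms(2)]] by blast
  note MN = joiningsD(1,2)[OF pair_measure_in_joinings[OF assms(1,2)]]
  have "bdd_above (?W ` joinings M N T S)"
  proof (rule bdd_aboveI2)
    fix L' assume "L' \<in> joinings M N T S"
    from joiningsD(1,2)[OF this] show "?W L' \<le> sqrt (card (aidx_set 1 1 R)) * B"
      by (rule wasserstein_array_laws_le[OF _ _ MN B \<open>0 < p\<close>])
  qed
  then show ?thesis
    unfolding Dep_def using assms(3) by (rule cSUP_upper2) simp
qed

lemma joining_eq_pair_measure_of_anchor_rects:
  assumes M: "cmmps M T" and N: "cmmps N S"
    and dense: "supp M \<subseteq> closure (as ` {1..})" "supp N \<subseteq> closure (bs ` {1..})"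
    and L: "L \<in> joinings M N T S"
    and eq: "\<And>X. X \<in> anchor_rects as bs \<Longrightarrow> emeasure L X = emeasure (M \<Otimes>\<^sub>M N) X"
  shows "L = M \<Otimes>\<^sub>M N"
proof -
  note MD = cmmpsD[OF M] and ND = cmmpsD[OF N]
  have MN: "M \<Otimes>\<^sub>M N \<in> joinings M N T S"
    using M N by (rule pair_measure_in_joinings)
  have space: "space K = UNIV" if "K \<in> joinings M N T S" for K
    using sets_eq_imp_space_eq[OF joiningsD(2)[OF that]] by (simp add: space_pair_measure)
  have sigma_eq: "emeasure L X = emeasure (M \<Otimes>\<^sub>M N) X" if "X \<in> sigma_sets UNIV (anchor_rects as bs)" for X
    using joiningsD(1)[OF L] space[OF L] _ joiningsD(1)[OF MN] space[OF MN] _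
      Int_stable_anchor_rects eq that
    by (rule prob_space_emeasure_eq_on_sigma_sets)
      (use anchor_rects_borel joiningsD(2)[OF L] joiningsD(2)[OF MN] in auto)
  show ?thesis
  proof (rule pair_measure_eqI[symmetric])
    show "sigma_finite_measure M" "sigma_finite_measure N"
      using MD(1) ND(1) by (simp_all add: prob_space_imp_sigma_finite)
    show "sets (M \<Otimes>\<^sub>M N) = sets L"
      using joiningsD(2)[OF L] joiningsD(2)[OF MN] by simp
  next
    fix A B assume "A \<in> sets M" "B \<in> sets N"
    then have AB: "A \<in> sets borel" "B \<in> sets borel"
      using MD(2) ND(2) by auto
    obtain A' where A': "A' \<in> sigma_sets UNIV (anchor_cells as)" "AE x in M. x \<in> A \<longleftrightarrow> x \<in> A'"
      using AE_eq_sigma_anchor_cells[OF MD(3,2) dense(1) AB(1)] by blast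
    obtain B' where B': "B' \<in> sigma_sets UNIV (anchor_cells bs)" "AE y in N. y \<in> B \<longleftrightarrow> y \<in> B'"
      using AE_eq_sigma_anchor_cells[OF ND(3,2) dense(2) AB(2)] by blast
    have A'B': "A' \<in> sets borel" "B' \<in> sets borel"
      using A'(1) B'(1) sets.sigma_sets_subset[OF anchor_cells_borel] by auto
    interpret N: prob_space N by (rule ND(1))
    have "emeasure M A * emeasure N B = emeasure (M \<Otimes>\<^sub>M N) (A \<times> B)"
      using \<open>A \<in> sets M\<close> \<open>B \<in> sets N\<close> by (rule N.emeasure_pair_measure_Times[symmetric])
    also have "\<dots> = emeasure (M \<Otimes>\<^sub>M N) (A' \<times> B')"
      by (rule joining_emeasure_Times_AE_cong[OF MN AB(1) A'B'(1) AB(2) A'B'(2) A'(2) B'(2)])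
    also have "\<dots> = emeasure L (A' \<times> B')"
      using A'(1) B'(1) by (intro sigma_eq[symmetric] Times_in_sigma_anchor_rects)
    also have "\<dots> = emeasure L (A \<times> B)"
      by (rule joining_emeasure_Times_AE_cong[OF L AB(1) A'B'(1) AB(2) A'B'(2) A'(2) B'(2), symmetric])
    finally show "emeasure M A * emeasure N B = emeasure L (A \<times> B)" .
  qed
qed

theorem theorem17:
  fixes M :: "'a::metric_space measure" and N :: "'b::metric_space measure"
    and T :: "'a \<Rightarrow> 'a" and S :: "'b \<Rightarrow> 'b"
    and as :: "nat \<Rightarrow> 'a" and bs :: "nat \<Rightarrow> 'b" and p :: real
  assumes "cmmps M T" and "cmmps N S"
    and "as ` {1..} \<subseteq> supp M" and "supp M \<subseteq> closure (as ` {1..})"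
    and "bs ` {1..} \<subseteq> supp N" and "supp N \<subseteq> closure (bs ` {1..})"
    and "p \<ge> 1"
  shows "(\<forall>n m R. n \<ge> 1 \<longrightarrow> m \<ge> 1 \<longrightarrow> R \<ge> 1 \<longrightarrow> Dep n m R p M N T S as bs = 0)
     \<longleftrightarrow> joinings M N T S = {M \<Otimes>\<^sub>M N}"
proof
  \<comment> \<open>The anchors need not lie in the supports: only their density there is used.\<close>
  assume Dep: "\<forall>n m R. n \<ge> 1 \<longrightarrow> m \<ge> 1 \<longrightarrow> R \<ge> 1 \<longrightarrow> Dep n m R p M N T S as bs = 0"
  have "0 < p"
    using assms(7) by simp
  obtain B where B: "0 \<le> B" "\<And>x y :: 'a. dist x y \<le> B" "\<And>x y :: 'b. dist x y \<le> B"
    using compact_UNIV_common_dist_bound[OF cmmpsD(3)[OF assms(1)] cmmpsD(3)[OF assms(2)]] by blast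
  have MN: "M \<Otimes>\<^sub>M N \<in> joinings M N T S"
    using assms(1,2) by (rule pair_measure_in_joinings)
  have "L = M \<Otimes>\<^sub>M N" if L: "L \<in> joinings M N T S" for L
  proof (rule joining_eq_pair_measure_of_anchor_rects[OF assms(1,2,4,6) L])
    have "wasserstein p (aidx_set 1 1 R) (array_law 1 1 R T S as bs L)
        (array_law 1 1 R T S as bs (M \<Otimes>\<^sub>M N)) = 0" if "1 \<le> R" for R
      using wasserstein_le_Dep_1_1[OF assms(1,2) L \<open>0 < p\<close>, of R as bs] Dep that
      by (intro antisym wasserstein_nonneg) auto
    with joiningsD(1,2)[OF L] joiningsD(1,2)[OF MN] B \<open>0 < p\<close>
    show "emeasure L X = emeasure (M \<Otimes>\<^sub>M N) X" if "X \<in> anchor_rects as bs" for X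
      using that by (intro emeasure_anchor_rects_eq_of_wasserstein_eq_0) auto
  qed
  with MN show "joinings M N T S = {M \<Otimes>\<^sub>M N}"
    by blast
next
  assume "joinings M N T S = {M \<Otimes>\<^sub>M N}"
  then show "\<forall>n m R. n \<ge> 1 \<longrightarrow> m \<ge> 1 \<longrightarrow> R \<ge> 1 \<longrightarrow> Dep n m R p M N T S as bs = 0"
    by (simp add: Dep_def wasserstein_self)
qed

end
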